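(* Let $\phi\in C^3((0,\infty))$, $\eta=\phi'$ and $\hat\eta(r)=\eta(r)+2\eta(2r)$, and suppose there are constants $0<a_0<\tilde r_1<\tilde r_2<2a_0$ and $a_1>a_0$ such that: $\eta'(r)>0$ for $0<r<\tilde r_1$ and $\eta'(r)<0$ for $r>\tilde r_1$; $\eta''(r)<0$ for $0<r<\tilde r_2$ and $\eta''(r)>0$ for $r>\tilde r_2$; $\hat\eta(r)<0$ for $0<r<a_0$ and $\hat\eta(r)>0$ for $r>a_0$; $\hat\eta'(r)>0$ for $0<r<a_1$ and $\hat\eta'(r)<0$ for $r>a_1$. Let $N,K$ be positive integers with $K<N-1$. For $\mathbf r=(r_{-N},\dots,r_N)\in(0,\infty)^{2N+1}$ define forces $F^{QCF}_j(\mathbf r)$, $j=-N,\dots,N+1$, by $F^{QCF}_{-N}(\mathbf r)=\eta(r_{-N})+2\eta(2r_{-N})$; $F^{QCF}_j(\mathbf r)=[\eta(r_j)+2\eta(2r_j)]-[\eta(r_{j-1})+2\eta(2r_{j-1})]$ for $-N+1\le j\le -K$ and for $K+1\le j\le N$; $F^{QCF}_j(\mathbf r)=[\eta(r_j)+\eta(r_j+r_{j+1})]-[\eta(r_{j-1})+\eta(r_{j-1}+r_{j-2})]$ for $-K+1\le j\le K$; $F^{QCF}_{N+1}(\mathbf r)=-[\eta(r_N)+2\eta(2r_N)]$. Let $f_{-N},\dots,f_{N+1}\in\mathbb R$ be anti-symmetric, i.e. $f_{j+1}=-f_{-j}$ for $j=0,\dots,N$, and set $\Phi_j=-\sum_{i=-N}^{j}f_i$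 for $j=-N,\dots,N$. Suppose $r_L,r_U$ satisfy $\tilde r_2/2<r_L<r_U$ and $\eta'(r_U)+12\eta'(2r_L)\ge0$. If $\eta(r_L)+4\eta(2r_L)-2\eta(2r_U)<\Phi_j<\eta(r_U)+4\eta(2r_U)-2\eta(2r_L)$ for $j=-N,\dots,N$, then the equilibrium equations $F^{QCF}_j(\mathbf r)+f_j=0$, $j=-N,\dots,N+1$, have a unique symmetric solution $\mathbf r$ in $\Omega=(r_L,r_U)^{2N+1}$.
   Context: $F^{QCF}_j$ is the force-based quasicontinuum force on the $j$-th representative atom of a one-dimensional chain, expressed in terms of the lattice spacings $r_j$ ($-K+1\le j\le K$ atomistic, the rest continuum), with nearest and next-nearest neighbour pair interactions given by $\phi$; $f_j$ are external forces. A vector $\mathbf r$ is symmetric if $r_{-j}=r_j$ for $j=1,\dots,N$. *)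

theory Defs
  imports "HOL-Analysis.Analysis"
begin

definition hat_eta :: "(real \<Rightarrow> real) \<Rightarrow> real \<Rightarrow> real" where
  "hat_eta \<eta> r = \<eta> r + 2 * \<eta> (2 * r)"

text \<open>Force-based quasicontinuum forces F^QCF_j(r), j = -N..N+1; r is indexed by integers
  (only r_{-N},...,r_N are used). Outside the index range the value is 0 (irrelevant).\<close>
definition Fqcf :: "(real \<Rightarrow> real) \<Rightarrow> int \<Rightarrow> int \<Rightarrow> (int \<Rightarrow> real) \<Rightarrow> int \<Rightarrow> real" where
  "Fqcf \<eta> N K r j =
    (if j = -N then hat_eta \<eta> (r (-N))
     else if (-N + 1 \<le> j \<and> j \<le> -K) \<or> (K + 1 \<le> j \<and> j \<le> N)
       then hat_eta \<eta> (r j) - hat_eta \<eta> (r (j - 1))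
     else if -K + 1 \<le> j \<and> j \<le> K
       then (\<eta> (r j) + \<eta> (r j + r (j + 1))) - (\<eta> (r (j - 1)) + \<eta> (r (j - 1) + r (j - 2)))
     else if j = N + 1 then - hat_eta \<eta> (r N)
     else 0)"

definition Omega :: "int \<Rightarrow> real \<Rightarrow> real \<Rightarrow> (int \<Rightarrow> real) set" where
  "Omega N rL rU = {r. (\<forall>j\<in>{-N..N}. rL < r j \<and> r j < rU) \<and> (\<forall>j. j \<notin> {-N..N} \<longrightarrow> r j = 0)}"

definition symmetric_vec :: "int \<Rightarrow> (int \<Rightarrow> real) \<Rightarrow> bool" where
  "symmetric_vec N r \<longleftrightarrow> (\<forall>j\<in>{1..N}. r (-j) = r j)"

end

theory Submission
  imports Defs
begin

text \<open>Summing the equilibrium equations from the left end turns them into equations for the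
  partial sums of the forces, with \<open>\<Phi> = cumulative_load f N\<close>: \<open>hat_eta \<eta> (r j) = \<Phi> j\<close> on the continuum sites \<open>j \<le> -K\<close>, and
  \<open>\<eta> (r j) = \<Phi> j + (interface terms) - \<eta> (r (j-1) + r j) - \<eta> (r j + r (j+1))\<close> on the
  atomistic sites \<open>-K < j \<le> 0\<close>; for symmetric \<open>r\<close> and antisymmetric \<open>f\<close> the equations with
  \<open>j > 0\<close> mirror these. The hypotheses give \<open>\<eta>' \<ge> \<eta>' rU > 0\<close> on \<open>[rL, rU]\<close> and
  \<open>\<eta>' (2 rL) \<le> \<eta>' < 0\<close> on \<open>[2 rL, 2 rU]\<close>, where all pair sums \<open>r i + r k\<close> lie. Hence
  \<open>hat_eta \<eta>\<close> is strictly increasing on \<open>[rL, rU]\<close>, which fixes the continuum strains, and the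
  bounds on \<open>\<Phi>\<close> keep every right-hand side in the range of \<open>\<eta>\<close> resp. \<open>hat_eta \<eta>\<close>. Solving
  the atomistic equations for \<open>r j\<close> by inverting \<open>\<eta>\<close> then defines a self-map of the closed box
  \<open>[rL, rU]\<^sup>2\<^sup>N\<^sup>+\<^sup>1\<close> whose fixed points are exactly the symmetric solutions; it maps
  into the open box and contracts the maximum norm by \<open>5 \<bar>\<eta>' (2 rL)\<bar> / \<eta>' rU \<le> 5/12\<close>, so
  Banach's fixed point theorem gives existence and uniqueness.\<close>

section \<open>Contractions of a box of real functions\<close>

lemma contraction_on_box_unique_fixpoint_extensional:
  fixes S :: "'i set" and a b c :: real and T :: "('i \<Rightarrow> real) \<Rightarrow> 'i \<Rightarrow> real"
  defines "B \<equiv> {x \<in> extensional S. \<forall>i\<in>S. x i \<in> {a..b}}"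
  assumes "finite S" "a \<le> b" "T \<in> B \<rightarrow> B" "c < 1"
    and contraction: "\<And>x y \<delta>. x \<in> B \<Longrightarrow> y \<in> B \<Longrightarrow> \<forall>i\<in>S. \<bar>x i - y i\<bar> \<le> \<delta> \<Longrightarrow>
                        \<forall>i\<in>S. \<bar>T x i - T y i\<bar> \<le> c * \<delta>"
  shows "\<exists>!x. x \<in> B \<and> T x = x"
proof (cases "S = {}")
  case True
  then have "B = {\<lambda>_. undefined}" by (auto simp: B_def)
  then show ?thesis using \<open>T \<in> B \<rightarrow> B\<close> by auto
next
  case False
  interpret Sub: Submetric UNIV dist "{a..b}"
    by unfold_locales auto
  interpret F: Metric_space "Sub.sub.fspace S" "Sub.sub.fdist S"
    by (rule Sub.sub.Metric_space_funspace)
  have "Sub.sub.mcomplete"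
    by (rule Sub.closedin_mcomplete_imp_mcomplete) auto
  then have "mcomplete_of (funspace S Sub.sub.Self)"
    by (rule Sub.sub.mcomplete_funspace)
  then have complete: "F.mcomplete"
    by (simp add: mcomplete_of_def Sub.sub.Self_def)
  have fspace_eq: "Sub.sub.fspace S = B"
    using \<open>finite S\<close>
    by (auto simp: Sub.sub.fspace_def B_def Sub.mbounded_submetric intro: finite_imp_bounded)
  have fdist_le: "Sub.sub.fdist S x y \<le> \<delta> \<longleftrightarrow> (\<forall>i\<in>S. \<bar>x i - y i\<bar> \<le> \<delta>)"
    if "x \<in> B" "y \<in> B" for x y \<delta>
    using Sub.sub.funspace_mdist_le[of x S y] that False fspace_eq by (simp add: dist_real_def)
  have T_contraction: "Sub.sub.fdist S (T x) (T y) \<le> c * Sub.sub.fdist S x y"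
    if "x \<in> B" "y \<in> B" for x y
    using that contraction[OF that] fdist_le[OF that] fdist_le[of "T x" "T y"] \<open>T \<in> B \<rightarrow> B\<close> by blast
  have "B \<noteq> {}"
    using \<open>a \<le> b\<close> by (auto simp: B_def intro!: exI[of _ "restrict (\<lambda>_. a) S"])
  then obtain x where "x \<in> B" "T x = x"
    using F.Banach_fixedpoint_thm[OF complete] \<open>T \<in> B \<rightarrow> B\<close> \<open>c < 1\<close> T_contraction
    unfolding fspace_eq by metis
  moreover have "y = x" if "y \<in> B" "T y = y" for y
    using F.contraction_imp_unique_fixpoint[of T y x c] that \<open>x \<in> B\<close> \<open>T x = x\<close>
      \<open>T \<in> B \<rightarrow> B\<close> \<open>c < 1\<close> T_contraction unfolding fspace_eq by blast
  ultimately show ?thesis by blast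
qed

lemma contraction_on_box_unique_fixpoint:
  fixes S :: "'i set" and a b c :: real and g :: "'i \<Rightarrow> real"
    and T :: "('i \<Rightarrow> real) \<Rightarrow> 'i \<Rightarrow> real"
  defines "B \<equiv> {x. (\<forall>i\<in>S. x i \<in> {a..b}) \<and> (\<forall>i. i \<notin> S \<longrightarrow> x i = g i)}"
  assumes "finite S" "a \<le> b" "T \<in> B \<rightarrow> B" "c < 1"
    and contraction: "\<And>x y \<delta>. x \<in> B \<Longrightarrow> y \<in> B \<Longrightarrow> \<forall>i\<in>S. \<bar>x i - y i\<bar> \<le> \<delta> \<Longrightarrow>
                        \<forall>i\<in>S. \<bar>T x i - T y i\<bar> \<le> c * \<delta>"
  shows "\<exists>!x. x \<in> B \<and> T x = x"
proof -
  define E where "E = {y \<in> extensional S. \<forall>i\<in>S. y i \<in> {a..b}}"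
  define extend where "extend y = override_on g y S" for y :: "'i \<Rightarrow> real"
  have extend_in: "extend y \<in> B" if "y \<in> E" for y
    using that by (auto simp: E_def B_def extend_def)
  have restrict_in: "restrict x S \<in> E" if "x \<in> B" for x
    using that by (auto simp: E_def B_def)
  have extend_restrict: "extend (restrict x S) = x" if "x \<in> B" for x
    using that by (auto simp: B_def extend_def override_on_def)
  have "\<exists>!y. y \<in> E \<and> restrict (T (extend y)) S = y"
  proof (rule contraction_on_box_unique_fixpoint_extensional[OF \<open>finite S\<close> \<open>a \<le> b\<close> _ \<open>c < 1\<close>, folded E_def])
    show "(\<lambda>y. restrict (T (extend y)) S) \<in> E \<rightarrow> E"
      by (intro funcsetI restrict_in funcset_mem[OF \<open>T \<in> B \<rightarrow> B\<close>] extend_in)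
    fix y z \<delta> assume "y \<in> E" "z \<in> E" and "\<forall>i\<in>S. \<bar>y i - z i\<bar> \<le> \<delta>"
    then show "\<forall>i\<in>S. \<bar>restrict (T (extend y)) S i - restrict (T (extend z)) S i\<bar> \<le> c * \<delta>"
      using contraction[OF extend_in extend_in] by (simp add: extend_def)
  qed
  then obtain y where y: "y \<in> E" "restrict (T (extend y)) S = y"
    and y_unique: "\<And>z. z \<in> E \<Longrightarrow> restrict (T (extend z)) S = z \<Longrightarrow> z = y"
    by blast
  have "T (extend y) = extend y"
    by (metis y extend_in extend_restrict \<open>T \<in> B \<rightarrow> B\<close> Pi_iff)
  moreover have "x = extend y" if "x \<in> B" "T x = x" for x
    using y_unique[OF restrict_in] that extend_restrict by metis
  ultimately show ?thesis using extend_in[OF y(1)] by blast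
qed

section \<open>Real functions with bounded derivative\<close>

lemma increment_ge_of_deriv_ge:
  fixes f f' :: "real \<Rightarrow> real"
  assumes "a \<le> b"
    and deriv: "\<And>x. a \<le> x \<Longrightarrow> x \<le> b \<Longrightarrow> (f has_real_derivative f' x) (at x)"
    and bound: "\<And>x. a \<le> x \<Longrightarrow> x \<le> b \<Longrightarrow> m \<le> f' x"
  shows "m * (b - a) \<le> f b - f a"
proof (cases "a = b")
  case False
  then obtain z where z: "a < z" "z < b" "f b - f a = (b - a) * f' z"
    using MVT2[of a b f f'] assms by force
  then show ?thesis
    using bound[of z] \<open>a \<le> b\<close> by (simp add: mult.commute mult_left_mono)
qed simp

lemma increment_le_of_deriv_le:
  fixes f f' :: "real \<Rightarrow> real"
  assumes "a \<le> b"
    and "\<And>x. a \<le> x \<Longrightarrow> x \<le> b \<Longrightarrow> (f has_real_derivative f' x) (at x)"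
    and "\<And>x. a \<le> x \<Longrightarrow> x \<le> b \<Longrightarrow> f' x \<le> M"
  shows "f b - f a \<le> M * (b - a)"
proof -
  have "- M * (b - a) \<le> - f b - - f a"
    by (rule increment_ge_of_deriv_ge[of a b "\<lambda>x. - f x" "\<lambda>x. - f' x"]) (use assms in \<open>auto intro: DERIV_minus\<close>)
  then show ?thesis by simp
qed

lemma abs_diff_ge_of_increment_ge:
  fixes g :: "real \<Rightarrow> real"
  assumes "\<And>x y. a \<le> x \<Longrightarrow> x \<le> y \<Longrightarrow> y \<le> b \<Longrightarrow> D * (y - x) \<le> g y - g x"
    and "x \<in> {a..b}" "y \<in> {a..b}"
  shows "D * \<bar>x - y\<bar> \<le> \<bar>g x - g y\<bar>"
  using assms(1)[of x y] assms(1)[of y x] assms(2,3)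
  by (cases "x \<le> y") (auto simp: abs_if algebra_simps)

lemma strict_mono_on_inv_into_interval:
  fixes g :: "real \<Rightarrow> real"
  assumes "a \<le> b" "strict_mono_on {a..b} g" "continuous_on {a..b} g" "g a < y" "y < g b"
  shows "inv_into {a..b} g y \<in> {a<..<b}" "g (inv_into {a..b} g y) = y"
proof -
  from IVT'[of g a y b] obtain t where t: "t \<in> {a..b}" "g t = y"
    using assms by force
  then have "y \<in> g ` {a..b}" by blast
  then show "g (inv_into {a..b} g y) = y"
    by (rule f_inv_into_f)
  have "inv_into {a..b} g y = t"
    using t assms(2) strict_mono_on_imp_inj_on inv_into_f_eq by metis
  moreover have "t \<noteq> a" "t \<noteq> b"
    using t assms(4,5) by auto
  ultimately show "inv_into {a..b} g y \<in> {a<..<b}"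
    using t by auto
qed

section \<open>Partial sums of the QCF forces\<close>

lemma telescoping_zero_iff:
  fixes g h :: "int \<Rightarrow> 'a::ab_group_add"
  assumes "a \<le> b" "h a = g a" "\<And>j. a < j \<Longrightarrow> j \<le> b \<Longrightarrow> h j = g j - g (j - 1)"
  shows "(\<forall>j\<in>{a..b}. h j = 0) \<longleftrightarrow> (\<forall>j\<in>{a..b}. g j = 0)"
proof
  assume h_zero: "\<forall>j\<in>{a..b}. h j = 0"
  have "j \<le> b \<Longrightarrow> g j = 0" if "a \<le> j" for j
    using that
  proof (induction j rule: int_ge_induct)
    case base
    then show ?case using h_zero assms(2) by simp
  next
    case (step j)
    then show ?case using h_zero assms(3)[of "j + 1"] by simp
  qed
  then show "\<forall>j\<in>{a..b}. g j = 0" by simp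
next
  assume g_zero: "\<forall>j\<in>{a..b}. g j = 0"
  show "\<forall>j\<in>{a..b}. h j = 0"
  proof
    fix j assume "j \<in> {a..b}"
    then show "h j = 0"
      using g_zero assms(2) assms(3)[of j] by (cases "j = a") auto
  qed
qed

definition cumulative_load :: "(int \<Rightarrow> real) \<Rightarrow> int \<Rightarrow> int \<Rightarrow> real" where
  "cumulative_load f N j = - (\<Sum>i=-N..j. f i)"

lemma cumulative_load_first: "cumulative_load f N (-N) = - f (-N)"
  by (simp add: cumulative_load_def)

lemma cumulative_load_step: "-N < j \<Longrightarrow> cumulative_load f N j = cumulative_load f N (j - 1) - f j"
proof -
  assume "-N < j"
  then have "{-N..j} = insert j {-N..j - 1}" by auto
  then show ?thesis by (simp add: cumulative_load_def)
qed

definition interface_correction :: "(real \<Rightarrow> real) \<Rightarrow> int \<Rightarrow> (int \<Rightarrow> real) \<Rightarrow> real" where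
  "interface_correction \<eta> K r = \<eta> (r (-K-1) + r (-K)) + \<eta> (r (-K) + r (-K+1)) - 2 * \<eta> (2 * r (-K))"

text \<open>For \<open>j \<le> 0\<close> this is the partial sum \<open>\<Sum>i=-N..j. Fqcf \<eta> N K r i\<close>
  (see \<open>Fqcf_eq_qcf_stress_diff\<close>); the interface correction is what the telescoping
  of the atomistic forces leaves over.\<close>
definition qcf_stress :: "(real \<Rightarrow> real) \<Rightarrow> int \<Rightarrow> (int \<Rightarrow> real) \<Rightarrow> int \<Rightarrow> real" where
  "qcf_stress \<eta> K r j =
    (if j \<le> -K then hat_eta \<eta> (r j)
     else \<eta> (r j) + \<eta> (r (j - 1) + r j) + \<eta> (r j + r (j + 1)) - interface_correction \<eta> K r)"

lemma Fqcf_first: "K \<le> N \<Longrightarrow> Fqcf \<eta> N K r (-N) = qcf_stress \<eta> K r (-N)"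
  by (simp add: Fqcf_def qcf_stress_def)

lemma Fqcf_eq_qcf_stress_diff:
  assumes "0 \<le> K" "-N < j" "j \<le> 0"
  shows "Fqcf \<eta> N K r j = qcf_stress \<eta> K r j - qcf_stress \<eta> K r (j - 1)"
proof (cases "j \<le> -K")
  case True
  then show ?thesis using assms by (simp add: Fqcf_def qcf_stress_def)
next
  case False
  have F: "Fqcf \<eta> N K r j = \<eta> (r j) + \<eta> (r j + r (j + 1)) - (\<eta> (r (j - 1)) + \<eta> (r (j - 1) + r (j - 2)))"
    using False assms by (simp add: Fqcf_def)
  show ?thesis
  proof (cases "j = -K + 1")
    case True
    then have K: "-K = j - 1" by simp
    show ?thesis
      unfolding F qcf_stress_def interface_correction_def hat_eta_def K by (simp add: algebra_simps)
  next
    case False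
    then have "j - 1 - 1 = j - 2" "j - 1 + 1 = j" by simp_all
    with False \<open>\<not> j \<le> -K\<close> show ?thesis
      unfolding F qcf_stress_def by (simp add: algebra_simps)
  qed
qed

lemma left_equilibrium_iff_qcf_stress:
  assumes "0 \<le> K" "K \<le> N"
  shows "(\<forall>j\<in>{-N..0}. Fqcf \<eta> N K r j + f j = 0) \<longleftrightarrow>
         (\<forall>j\<in>{-N..0}. qcf_stress \<eta> K r j = cumulative_load f N j)"
proof -
  have "(\<forall>j\<in>{-N..0}. Fqcf \<eta> N K r j + f j = 0) \<longleftrightarrow>
        (\<forall>j\<in>{-N..0}. qcf_stress \<eta> K r j - cumulative_load f N j = 0)"
    using assms
    by (intro telescoping_zero_iff)
      (simp_all add: Fqcf_first cumulative_load_first Fqcf_eq_qcf_stress_diff cumulative_load_step)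
  then show ?thesis by simp
qed

lemma symmetric_vecD:
  assumes "symmetric_vec N r" "\<bar>i\<bar> \<le> N"
  shows "r (-i) = r i"
proof -
  consider "i = 0" | "0 < i" | "i < 0" by linarith
  then show ?thesis
  proof cases
    case 2
    then show ?thesis using assms by (simp add: symmetric_vec_def)
  next
    case 3
    then have "-i \<in> {1..N}" using assms by auto
    then have "r (- (-i)) = r (-i)"
      using assms(1) unfolding symmetric_vec_def by blast
    then show ?thesis by simp
  qed simp
qed

lemma Fqcf_reflect:
  assumes "symmetric_vec N r" "0 \<le> K" "K < N" "1 \<le> j" "j \<le> N + 1"
  shows "Fqcf \<eta> N K r j = - Fqcf \<eta> N K r (1 - j)"
proof -
  have r: "r (-i) = r i" if "\<bar>i\<bar> \<le> N" for i
    using symmetric_vecD[OF assms(1) that] .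
  consider "j = N + 1" | "K + 1 \<le> j" "j \<le> N" | "j \<le> K" using assms by linarith
  then show ?thesis
  proof cases
    case 1
    then show ?thesis using assms r[of N] by (simp add: Fqcf_def)
  next
    case 2
    then show ?thesis using assms r[of j] r[of "j - 1"] by (simp add: Fqcf_def)
  next
    case 3
    have "1 - j - 1 = - j" "1 - j + 1 = 2 - j" "1 - j - 2 = - j - 1" by simp_all
    then show ?thesis
      using 3 assms r[of j] r[of "j - 1"] r[of "j - 2"] r[of "j + 1"]
      by (simp add: Fqcf_def add.commute)
  qed
qed

lemma equilibrium_iff_left_equilibrium:
  assumes "symmetric_vec N r" "0 \<le> K" "K < N"
    and antisymmetric: "\<forall>j\<in>{0..N}. f (j + 1) = - f (-j)"
  shows "(\<forall>j\<in>{-N..N+1}. Fqcf \<eta> N K r j + f j = 0) \<longleftrightarrow> (\<forall>j\<in>{-N..0}. Fqcf \<eta> N K r j + f j = 0)"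
proof
  assume left: "\<forall>j\<in>{-N..0}. Fqcf \<eta> N K r j + f j = 0"
  have reflect: "Fqcf \<eta> N K r j + f j = - (Fqcf \<eta> N K r (1 - j) + f (1 - j))"
    if "1 \<le> j" "j \<le> N + 1" for j
    using Fqcf_reflect[OF assms(1-3) that] antisymmetric[rule_format, of "j - 1"] that by simp
  show "\<forall>j\<in>{-N..N+1}. Fqcf \<eta> N K r j + f j = 0"
  proof
    fix j assume "j \<in> {-N..N+1}"
    then show "Fqcf \<eta> N K r j + f j = 0"
      using left reflect[of j] by (cases "j \<le> 0") auto
  qed
qed (use assms in auto)

section \<open>The potential on the strain ranges\<close>

locale qcf_potential =
  fixes \<eta> \<eta>1 \<eta>2 :: "real \<Rightarrow> real" and r1 r2 rL rU :: real
  assumes eta_deriv: "\<And>x. 0 < x \<Longrightarrow> (\<eta> has_real_derivative \<eta>1 x) (at x)"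
    and eta1_deriv: "\<And>x. 0 < x \<Longrightarrow> (\<eta>1 has_real_derivative \<eta>2 x) (at x)"
    and r1_pos: "0 < r1" and r1_less_r2: "r1 < r2"
    and eta1_neg: "\<And>r. r1 < r \<Longrightarrow> \<eta>1 r < 0"
    and eta2_nonpos: "\<And>r. 0 < r \<Longrightarrow> r < r2 \<Longrightarrow> \<eta>2 r \<le> 0"
    and eta2_nonneg: "\<And>r. r2 < r \<Longrightarrow> 0 \<le> \<eta>2 r"
    and rL_gt: "r2 / 2 < rL" and rL_less_rU: "rL < rU"
    and eta1_rU_ge: "0 \<le> \<eta>1 rU + 12 * \<eta>1 (2 * rL)"
begin

lemma rL_pos: "0 < rL"
  using r1_pos r1_less_r2 rL_gt by linarith

lemma eta1_2rL_neg: "\<eta>1 (2 * rL) < 0"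
  using eta1_neg r1_less_r2 rL_gt by auto

lemma eta1_rU_pos: "0 < \<eta>1 rU"
  using eta1_2rL_neg eta1_rU_ge by linarith

lemma rU_less_r2: "rU < r2"
  using eta1_neg[of rU] eta1_rU_pos r1_less_r2 by fastforce

lemma eta1_ge_eta1_rU: "rL \<le> x \<Longrightarrow> x \<le> rU \<Longrightarrow> \<eta>1 rU \<le> \<eta>1 x"
  using increment_le_of_deriv_le[of x rU \<eta>1 \<eta>2 0] eta1_deriv eta2_nonpos rL_pos rU_less_r2
  by force

lemma eta1_on_double_range:
  assumes "2 * rL \<le> s" "s \<le> 2 * rU"
  shows "\<eta>1 (2 * rL) \<le> \<eta>1 s" "\<eta>1 s < 0"
  using increment_ge_of_deriv_ge[of "2 * rL" s \<eta>1 \<eta>2 0] eta1_deriv eta2_nonneg eta1_neg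
    assms rL_pos rL_gt r1_less_r2 by force+

lemma eta_increment_ge:
  "rL \<le> x \<Longrightarrow> x \<le> y \<Longrightarrow> y \<le> rU \<Longrightarrow> \<eta>1 rU * (y - x) \<le> \<eta> y - \<eta> x"
  using increment_ge_of_deriv_ge[of x y \<eta> \<eta>1] eta_deriv eta1_ge_eta1_rU rL_pos by force

lemma eta_expansive:
  "x \<in> {rL..rU} \<Longrightarrow> y \<in> {rL..rU} \<Longrightarrow> \<eta>1 rU * \<bar>x - y\<bar> \<le> \<bar>\<eta> x - \<eta> y\<bar>"
  by (rule abs_diff_ge_of_increment_ge[OF eta_increment_ge])

lemma eta_double_range_increment:
  assumes "2 * rL \<le> s" "s \<le> t" "t \<le> 2 * rU"
  shows "\<eta> t \<le> \<eta> s" "\<eta> s - \<eta> t \<le> - \<eta>1 (2 * rL) * (t - s)"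
proof -
  have deriv: "(\<eta> has_real_derivative \<eta>1 x) (at x)" if "s \<le> x" for x
    using eta_deriv rL_pos assms that by force
  have "\<eta> t - \<eta> s \<le> 0 * (t - s)"
    using assms deriv eta1_on_double_range(2)
    by (intro increment_le_of_deriv_le[where f' = \<eta>1]) (auto intro: less_imp_le)
  then show "\<eta> t \<le> \<eta> s" by simp
  have "\<eta>1 (2 * rL) * (t - s) \<le> \<eta> t - \<eta> s"
    using assms deriv eta1_on_double_range(1) by (intro increment_ge_of_deriv_ge[where f' = \<eta>1]) auto
  then show "\<eta> s - \<eta> t \<le> - \<eta>1 (2 * rL) * (t - s)" by simp
qed

lemma eta_double_range_lipschitz:
  assumes "s \<in> {2 * rL..2 * rU}" "t \<in> {2 * rL..2 * rU}"
  shows "\<bar>\<eta> s - \<eta> t\<bar> \<le> - \<eta>1 (2 * rL) * \<bar>s - t\<bar>"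
  using eta_double_range_increment[of s t] eta_double_range_increment[of t s] assms
  by (cases "s \<le> t") (auto simp: abs_if algebra_simps)

lemma eta_double_range_bounds:
  "s \<in> {2 * rL..2 * rU} \<Longrightarrow> \<eta> (2 * rU) \<le> \<eta> s \<and> \<eta> s \<le> \<eta> (2 * rL)"
  using eta_double_range_increment(1) by auto

text \<open>The continuum part of the force is monotone because \<open>\<eta>\<close> grows at rate at least
  \<open>\<eta>1 rU\<close> on \<open>[rL, rU]\<close>, while \<open>2 \<eta>(2r)\<close> decays at rate at most \<open>- 4 \<eta>1 (2 rL) \<le> \<eta>1 rU / 3\<close>.\<close>
lemma hat_eta_strict_mono_on: "strict_mono_on {rL..rU} (hat_eta \<eta>)"
proof (rule strict_mono_onI)
  fix x y assume "x \<in> {rL..rU}" "y \<in> {rL..rU}" "x < y"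
  then have "\<eta>1 rU * (y - x) \<le> \<eta> y - \<eta> x"
    and "\<eta> (2 * x) - \<eta> (2 * y) \<le> - \<eta>1 (2 * rL) * (2 * y - 2 * x)"
    using eta_increment_ge eta_double_range_increment(2)[of "2 * x" "2 * y"] by auto
  moreover have "- \<eta>1 (2 * rL) * 4 * (y - x) < \<eta>1 rU * (y - x)"
    using eta1_rU_ge eta1_2rL_neg \<open>x < y\<close> by (intro mult_strict_right_mono) auto
  ultimately show "hat_eta \<eta> x < hat_eta \<eta> y"
    unfolding hat_eta_def by (simp add: algebra_simps)
qed

lemma eta_strict_mono_on: "strict_mono_on {rL..rU} \<eta>"
  using eta_increment_ge eta1_rU_pos
  by (intro strict_mono_onI) (smt (verit) atLeastAtMost_iff mult_pos_pos)

lemma eta_isCont: "0 < x \<Longrightarrow> isCont \<eta> x"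
  using eta_deriv DERIV_isCont by blast

lemma hat_eta_isCont: "0 < x \<Longrightarrow> isCont (hat_eta \<eta>) x"
  unfolding hat_eta_def[abs_def]
  by (intro continuous_intros eta_isCont isCont_o2[where f = "\<lambda>x. 2 * x", OF _ eta_isCont]) auto

lemma eta_continuous_on: "continuous_on {rL..rU} \<eta>"
  using eta_isCont rL_pos by (intro continuous_at_imp_continuous_on) auto

lemma hat_eta_continuous_on: "continuous_on {rL..rU} (hat_eta \<eta>)"
  using hat_eta_isCont rL_pos by (intro continuous_at_imp_continuous_on) auto

end

section \<open>The fixed-point formulation\<close>

locale qcf_equilibrium = qcf_potential +
  fixes N K :: int and f :: "int \<Rightarrow> real"
  assumes K_nonneg: "0 \<le> K" and K_less_N: "K < N"
    and load_bounds: "\<And>j. j \<in> {-N..N} \<Longrightarrow>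
      \<eta> rL + 4 * \<eta> (2 * rL) - 2 * \<eta> (2 * rU) < cumulative_load f N j \<and>
      cumulative_load f N j < \<eta> rU + 4 * \<eta> (2 * rU) - 2 * \<eta> (2 * rL)"
begin

definition Omega_closed :: "(int \<Rightarrow> real) set" where
  "Omega_closed = {r. (\<forall>i\<in>{-N..N}. r i \<in> {rL..rU}) \<and> (\<forall>i. i \<notin> {-N..N} \<longrightarrow> r i = 0)}"

lemma Omega_subset_Omega_closed: "Omega N rL rU \<subseteq> Omega_closed"
  by (auto simp: Omega_def Omega_closed_def less_imp_le)

lemma Omega_closedD: "r \<in> Omega_closed \<Longrightarrow> \<bar>i\<bar> \<le> N \<Longrightarrow> r i \<in> {rL..rU}"
  by (simp add: Omega_closed_def abs_le_iff)

lemma Omega_closed_pair_sum: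
  "r \<in> Omega_closed \<Longrightarrow> \<bar>i\<bar> \<le> N \<Longrightarrow> \<bar>k\<bar> \<le> N \<Longrightarrow> r i + r k \<in> {2 * rL..2 * rU}"
  using Omega_closedD[of r i] Omega_closedD[of r k] by auto

definition continuum_strain :: "int \<Rightarrow> real" where
  "continuum_strain m = inv_into {rL..rU} (hat_eta \<eta>) (cumulative_load f N (-m))"

lemma continuum_strain:
  assumes "K \<le> m" "m \<le> N"
  shows "continuum_strain m \<in> {rL<..<rU}" "hat_eta \<eta> (continuum_strain m) = cumulative_load f N (-m)"
proof -
  have "\<eta> (2 * rU) \<le> \<eta> (2 * rL)"
    using eta_double_range_bounds[of "2 * rL"] rL_less_rU by simp
  then have "hat_eta \<eta> rL < cumulative_load f N (-m)" "cumulative_load f N (-m) < hat_eta \<eta> rU"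
    using load_bounds[of "-m"] assms K_nonneg unfolding hat_eta_def by auto
  then show "continuum_strain m \<in> {rL<..<rU}" "hat_eta \<eta> (continuum_strain m) = cumulative_load f N (-m)"
    unfolding continuum_strain_def
    using strict_mono_on_inv_into_interval[OF _ hat_eta_strict_mono_on hat_eta_continuous_on] rL_less_rU
    by auto
qed

lemma continuum_strain_unique:
  assumes "K \<le> m" "m \<le> N" "x \<in> {rL..rU}" "hat_eta \<eta> x = cumulative_load f N (-m)"
  shows "x = continuum_strain m"
  unfolding continuum_strain_def
  using inv_into_f_eq[OF strict_mono_on_imp_inj_on[OF hat_eta_strict_mono_on] assms(3,4)] by simp

definition with_continuum :: "(int \<Rightarrow> real) \<Rightarrow> int \<Rightarrow> real" where
  "with_continuum r i = (if K \<le> \<bar>i\<bar> \<and> \<bar>i\<bar> \<le> N then continuum_strain \<bar>i\<bar> else r i)"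

lemma with_continuum_in_Omega_closed: "r \<in> Omega_closed \<Longrightarrow> with_continuum r \<in> Omega_closed"
  using continuum_strain(1) by (fastforce simp: Omega_closed_def with_continuum_def)

definition atomistic_rhs :: "(int \<Rightarrow> real) \<Rightarrow> int \<Rightarrow> real" where
  "atomistic_rhs r j =
    cumulative_load f N j + interface_correction \<eta> K r - \<eta> (r (j - 1) + r j) - \<eta> (r j + r (j + 1))"

lemma qcf_stress_eq_iff_atomistic_rhs:
  "-K < j \<Longrightarrow> qcf_stress \<eta> K r j = cumulative_load f N j \<longleftrightarrow> \<eta> (r j) = atomistic_rhs r j"
  by (auto simp: qcf_stress_def atomistic_rhs_def)

lemma atomistic_rhs_bounds:
  assumes "r \<in> Omega_closed" "-K < j" "j \<le> 0"
  shows "\<eta> rL < atomistic_rhs r j" "atomistic_rhs r j < \<eta> rU"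
proof -
  define lo hi where "lo = \<eta> (2 * rU)" and "hi = \<eta> (2 * rL)"
  have lo: "lo \<le> \<eta> (r i + r k)" and hi: "\<eta> (r i + r k) \<le> hi"
    if "\<bar>i\<bar> \<le> N" "\<bar>k\<bar> \<le> N" for i k
    using eta_double_range_bounds[OF Omega_closed_pair_sum[OF assms(1) that]] by (simp_all add: lo_def hi_def)
  have indices: "\<bar>-K-1\<bar> \<le> N" "\<bar>-K\<bar> \<le> N" "\<bar>-K+1\<bar> \<le> N" "\<bar>j-1\<bar> \<le> N" "\<bar>j\<bar> \<le> N" "\<bar>j+1\<bar> \<le> N"
    using assms(2,3) K_nonneg K_less_N by (simp_all add: abs_le_iff)
  have "2 * lo - 2 * hi \<le> interface_correction \<eta> K r \<and> interface_correction \<eta> K r \<le> 2 * hi - 2 * lo"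
    using lo[OF indices(1,2)] hi[OF indices(1,2)] lo[OF indices(2,3)] hi[OF indices(2,3)]
      lo[OF indices(2,2)] hi[OF indices(2,2)]
    unfolding interface_correction_def mult_2[of "r (-K)"] by linarith
  moreover have "j \<in> {-N..N}" using indices(5) by (simp add: abs_le_iff)
  ultimately show "\<eta> rL < atomistic_rhs r j" "atomistic_rhs r j < \<eta> rU"
    using load_bounds[of j] lo[OF indices(4,5)] hi[OF indices(4,5)] lo[OF indices(5,6)] hi[OF indices(5,6)]
    unfolding atomistic_rhs_def lo_def hi_def by linarith+
qed

lemma atomistic_rhs_lipschitz:
  assumes "r \<in> Omega_closed" "r' \<in> Omega_closed" "-K < j" "j \<le> 0"
    and "r (-K-1) = r' (-K-1)" "r (-K) = r' (-K)"
    and dist: "\<forall>i\<in>{-N..N}. \<bar>r i - r' i\<bar> \<le> \<delta>"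
  shows "\<bar>atomistic_rhs r j - atomistic_rhs r' j\<bar> \<le> 5 * - \<eta>1 (2 * rL) * \<delta>"
proof -
  define E where "E = - \<eta>1 (2 * rL)"
  have "0 \<le> E" using eta1_2rL_neg by (simp add: E_def)
  have E_dist: "E * \<bar>r i - r' i\<bar> \<le> E * \<delta>" if "\<bar>i\<bar> \<le> N" for i
    using dist that \<open>0 \<le> E\<close> by (intro mult_left_mono) (auto simp: abs_le_iff)
  have lip: "\<bar>\<eta> (r i + r k) - \<eta> (r' i + r' k)\<bar> \<le> E * \<bar>r i - r' i\<bar> + E * \<bar>r k - r' k\<bar>"
    if "\<bar>i\<bar> \<le> N" "\<bar>k\<bar> \<le> N" for i k
  proof -
    have "\<bar>\<eta> (r i + r k) - \<eta> (r' i + r' k)\<bar> \<le> E * \<bar>(r i + r k) - (r' i + r' k)\<bar>"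
      unfolding E_def
      using eta_double_range_lipschitz[OF Omega_closed_pair_sum[OF assms(1) that]
          Omega_closed_pair_sum[OF assms(2) that]] .
    also have "\<dots> \<le> E * (\<bar>r i - r' i\<bar> + \<bar>r k - r' k\<bar>)"
      using \<open>0 \<le> E\<close> by (intro mult_left_mono) auto
    finally show ?thesis by (simp add: distrib_left)
  qed
  have indices: "\<bar>-K\<bar> \<le> N" "\<bar>-K+1\<bar> \<le> N" "\<bar>j-1\<bar> \<le> N" "\<bar>j\<bar> \<le> N" "\<bar>j+1\<bar> \<le> N"
    using assms(3,4) K_nonneg K_less_N by (simp_all add: abs_le_iff)
  define A1 where "A1 = \<eta> (r (-K) + r (-K+1)) - \<eta> (r' (-K) + r' (-K+1))"
  define A2 where "A2 = \<eta> (r (j-1) + r j) - \<eta> (r' (j-1) + r' j)"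
  define A3 where "A3 = \<eta> (r j + r (j+1)) - \<eta> (r' j + r' (j+1))"
  have "atomistic_rhs r j - atomistic_rhs r' j = A1 - A2 - A3"
    using assms(5,6) by (simp add: atomistic_rhs_def interface_correction_def A1_def A2_def A3_def)
  moreover have "\<bar>A1\<bar> \<le> E * \<delta>"
    using lip[OF indices(1,2)] E_dist[OF indices(2)] assms(6) by (simp add: A1_def)
  moreover have "\<bar>A2\<bar> \<le> 2 * E * \<delta>"
    using lip[OF indices(3,4)] E_dist[OF indices(3)] E_dist[OF indices(4)] unfolding A2_def by linarith
  moreover have "\<bar>A3\<bar> \<le> 2 * E * \<delta>"
    using lip[OF indices(4,5)] E_dist[OF indices(4)] E_dist[OF indices(5)] unfolding A3_def by linarith
  ultimately show ?thesis
    unfolding E_def[symmetric] by linarith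
qed

text \<open>Freezing the continuum strains before evaluating the right-hand side leaves only
  \<open>r (-K+1)\<close> variable in the interface correction. This gives the contraction factor
  \<open>5 (- \<eta>1 (2 rL)) / \<eta>1 rU \<le> 5/12\<close>; letting all strains vary would give \<open>12 (- \<eta>1 (2 rL)) / \<eta>1 rU\<close>,
  which the hypothesis on \<open>rL, rU\<close> only bounds by \<open>1\<close>.\<close>
definition qcf_map :: "(int \<Rightarrow> real) \<Rightarrow> int \<Rightarrow> real" where
  "qcf_map r i =
    (if N < \<bar>i\<bar> then 0
     else if K \<le> \<bar>i\<bar> then continuum_strain \<bar>i\<bar>
     else inv_into {rL..rU} \<eta> (atomistic_rhs (with_continuum r) (- \<bar>i\<bar>)))"

lemma eta_inv_atomistic_rhs:
  assumes "r \<in> Omega_closed" "-K < j" "j \<le> 0"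
  shows "inv_into {rL..rU} \<eta> (atomistic_rhs r j) \<in> {rL<..<rU}"
    "\<eta> (inv_into {rL..rU} \<eta> (atomistic_rhs r j)) = atomistic_rhs r j"
  using strict_mono_on_inv_into_interval[OF _ eta_strict_mono_on eta_continuous_on]
    atomistic_rhs_bounds[OF assms] rL_less_rU by auto

lemma qcf_map_in_Omega: "r \<in> Omega_closed \<Longrightarrow> qcf_map r \<in> Omega N rL rU"
  using continuum_strain(1) eta_inv_atomistic_rhs(1)[OF with_continuum_in_Omega_closed]
  by (auto simp: Omega_def qcf_map_def)

lemma symmetric_qcf_map: "symmetric_vec N (qcf_map r)"
  by (simp add: symmetric_vec_def qcf_map_def)

lemma with_continuum_qcf_map: "with_continuum (qcf_map r) = qcf_map r"
  by (auto simp: with_continuum_def qcf_map_def)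

lemma qcf_map_contraction:
  assumes "r \<in> Omega_closed" "r' \<in> Omega_closed" and dist: "\<forall>i\<in>{-N..N}. \<bar>r i - r' i\<bar> \<le> \<delta>"
  shows "\<forall>i\<in>{-N..N}. \<bar>qcf_map r i - qcf_map r' i\<bar> \<le> 5 * - \<eta>1 (2 * rL) / \<eta>1 rU * \<delta>"
proof
  fix i assume i: "i \<in> {-N..N}"
  have "0 \<in> {-N..N}" using K_nonneg K_less_N by simp
  then have "0 \<le> \<delta>"
    using dist abs_ge_zero order_trans by blast
  have i': "\<bar>i\<bar> \<le> N" using i by (simp add: abs_le_iff)
  show "\<bar>qcf_map r i - qcf_map r' i\<bar> \<le> 5 * - \<eta>1 (2 * rL) / \<eta>1 rU * \<delta>"
  proof (cases "K \<le> \<bar>i\<bar>")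
    case True
    have "0 \<le> 5 * - \<eta>1 (2 * rL) / \<eta>1 rU * \<delta>"
      using \<open>0 \<le> \<delta>\<close> eta1_2rL_neg eta1_rU_pos
      by (intro mult_nonneg_nonneg divide_nonneg_pos) auto
    with True i show ?thesis by (simp add: qcf_map_def)
  next
    case False
    define w w' where "w = with_continuum r" and "w' = with_continuum r'"
    have w: "w \<in> Omega_closed" "w' \<in> Omega_closed"
      using assms with_continuum_in_Omega_closed by (simp_all add: w_def w'_def)
    have "\<forall>i\<in>{-N..N}. \<bar>w i - w' i\<bar> \<le> \<delta>"
      using dist \<open>0 \<le> \<delta>\<close> by (simp add: w_def w'_def with_continuum_def)
    moreover have "w (-K-1) = w' (-K-1)" "w (-K) = w' (-K)"
      using K_nonneg K_less_N by (simp_all add: w_def w'_def with_continuum_def)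
    ultimately have rhs: "\<bar>atomistic_rhs w (-\<bar>i\<bar>) - atomistic_rhs w' (-\<bar>i\<bar>)\<bar> \<le> 5 * - \<eta>1 (2 * rL) * \<delta>"
      using atomistic_rhs_lipschitz[OF w] False by simp
    have "\<eta>1 rU * \<bar>qcf_map r i - qcf_map r' i\<bar> \<le> \<bar>\<eta> (qcf_map r i) - \<eta> (qcf_map r' i)\<bar>"
      using Omega_closedD[OF subsetD[OF Omega_subset_Omega_closed qcf_map_in_Omega[OF assms(1)]] i']
        Omega_closedD[OF subsetD[OF Omega_subset_Omega_closed qcf_map_in_Omega[OF assms(2)]] i']
      by (rule eta_expansive)
    also have "\<dots> \<le> 5 * - \<eta>1 (2 * rL) * \<delta>"
    proof -
      have j: "-K < -\<bar>i\<bar>" "-\<bar>i\<bar> \<le> 0" using False by auto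
      show ?thesis
        using rhs eta_inv_atomistic_rhs(2)[OF w(1) j] eta_inv_atomistic_rhs(2)[OF w(2) j] False i'
        by (simp add: qcf_map_def w_def w'_def)
    qed
    finally show ?thesis
      using eta1_rU_pos by (simp add: field_simps)
  qed
qed

lemma qcf_map_contraction_factor: "5 * - \<eta>1 (2 * rL) / \<eta>1 rU < 1"
  using eta1_rU_ge eta1_2rL_neg eta1_rU_pos by (simp add: field_simps)


lemma qcf_map_fixpoint_if_solution:
  assumes "r \<in> Omega N rL rU" "symmetric_vec N r"
    and stress: "\<forall>j\<in>{-N..0}. qcf_stress \<eta> K r j = cumulative_load f N j"
  shows "qcf_map r = r"
proof
  have r_closed: "r \<in> Omega_closed"
    using assms(1) Omega_subset_Omega_closed by blast
  have mirror: "r (-\<bar>i\<bar>) = r i" if "\<bar>i\<bar> \<le> N" for i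
    using symmetric_vecD[OF assms(2) that] by (cases "0 \<le> i") auto
  have stress_at: "qcf_stress \<eta> K r (-\<bar>i\<bar>) = cumulative_load f N (-\<bar>i\<bar>)" if "\<bar>i\<bar> \<le> N" for i
    using stress that by simp
  have continuum: "r i = continuum_strain \<bar>i\<bar>" if "K \<le> \<bar>i\<bar>" "\<bar>i\<bar> \<le> N" for i
  proof -
    have "hat_eta \<eta> (r (-\<bar>i\<bar>)) = cumulative_load f N (-\<bar>i\<bar>)"
      using stress_at[OF that(2)] that(1) by (simp add: qcf_stress_def)
    then have "r (-\<bar>i\<bar>) = continuum_strain \<bar>i\<bar>"
      using continuum_strain_unique that Omega_closedD[OF r_closed] by simp
    then show ?thesis using mirror that(2) by simp
  qed
  then have "with_continuum r = r"
    by (auto simp: with_continuum_def)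
  fix i
  consider "N < \<bar>i\<bar>" | "K \<le> \<bar>i\<bar>" "\<bar>i\<bar> \<le> N" | "\<bar>i\<bar> < K" by linarith
  then show "qcf_map r i = r i"
  proof cases
    case 1
    then have "i \<notin> {-N..N}" by (cases "0 \<le> i") auto
    with 1 show ?thesis using assms(1) by (simp add: qcf_map_def Omega_def)
  next
    case 2
    then show ?thesis using continuum by (simp add: qcf_map_def)
  next
    case 3
    have "\<eta> (r (-\<bar>i\<bar>)) = atomistic_rhs r (-\<bar>i\<bar>)"
      using stress_at[of i] 3 K_less_N qcf_stress_eq_iff_atomistic_rhs[of "-\<bar>i\<bar>" r] by simp
    then have "qcf_map r i = r (-\<bar>i\<bar>)"
      using 3 K_less_N \<open>with_continuum r = r\<close> Omega_closedD[OF r_closed, of "-\<bar>i\<bar>"]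
        inv_into_f_eq[OF strict_mono_on_imp_inj_on[OF eta_strict_mono_on]]
      by (simp add: qcf_map_def)
    then show ?thesis using 3 K_less_N mirror by simp
  qed
qed

lemma solution_if_qcf_map_fixpoint:
  assumes "r \<in> Omega_closed" "qcf_map r = r"
  shows "r \<in> Omega N rL rU" "symmetric_vec N r"
    "\<forall>j\<in>{-N..0}. qcf_stress \<eta> K r j = cumulative_load f N j"
proof -
  show "r \<in> Omega N rL rU" "symmetric_vec N r"
    using qcf_map_in_Omega[OF assms(1)] symmetric_qcf_map[of r] assms(2) by simp_all
  have "with_continuum r = r"
    using with_continuum_qcf_map[of r] assms(2) by simp
  show "\<forall>j\<in>{-N..0}. qcf_stress \<eta> K r j = cumulative_load f N j"
  proof
    fix j assume j: "j \<in> {-N..0}"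
    show "qcf_stress \<eta> K r j = cumulative_load f N j"
    proof (cases "j \<le> -K")
      case True
      then have "r j = continuum_strain (-j)"
        using j assms(2)[THEN fun_cong, of j] by (simp add: qcf_map_def)
      then show ?thesis
        using True j continuum_strain(2)[of "-j"] by (simp add: qcf_stress_def)
    next
      case False
      then have "r j = inv_into {rL..rU} \<eta> (atomistic_rhs r j)"
        using j assms(2)[THEN fun_cong, of j] \<open>with_continuum r = r\<close> by (simp add: qcf_map_def)
      then show ?thesis
        using eta_inv_atomistic_rhs(2)[OF assms(1), of j] False j qcf_stress_eq_iff_atomistic_rhs
        by simp
    qed
  qed
qed

lemma unique_qcf_map_fixpoint: "\<exists>!r. r \<in> Omega_closed \<and> qcf_map r = r"
proof (rule contraction_on_box_unique_fixpoint[where S = "{-N..N}" and a = rL and b = rU and g = "\<lambda>_. 0",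
      OF _ _ _ qcf_map_contraction_factor, folded Omega_closed_def])
  show "qcf_map \<in> Omega_closed \<rightarrow> Omega_closed"
    using qcf_map_in_Omega Omega_subset_Omega_closed by blast
qed (use rL_less_rU qcf_map_contraction in \<open>simp_all add: Omega_closed_def\<close>)

lemma symmetric_equilibrium_iff_qcf_map_fixpoint:
  assumes "\<forall>j\<in>{0..N}. f (j + 1) = - f (-j)"
  shows "r \<in> Omega N rL rU \<and> symmetric_vec N r \<and> (\<forall>j\<in>{-N..N+1}. Fqcf \<eta> N K r j + f j = 0) \<longleftrightarrow>
         r \<in> Omega_closed \<and> qcf_map r = r"
proof -
  have equations: "(\<forall>j\<in>{-N..N+1}. Fqcf \<eta> N K r j + f j = 0) \<longleftrightarrow>
      (\<forall>j\<in>{-N..0}. qcf_stress \<eta> K r j = cumulative_load f N j)" if "symmetric_vec N r"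
    using equilibrium_iff_left_equilibrium[OF that K_nonneg K_less_N assms]
      left_equilibrium_iff_qcf_stress[OF K_nonneg less_imp_le[OF K_less_N]] by simp
  show ?thesis
    using equations qcf_map_fixpoint_if_solution solution_if_qcf_map_fixpoint
      Omega_subset_Omega_closed by blast
qed

end

theorem corollary4p6:
  fixes \<phi> \<eta> \<eta>1 \<eta>2 \<eta>3 :: "real \<Rightarrow> real"
    and a0 r1 r2 a1 rL rU :: real and N K :: int and f :: "int \<Rightarrow> real"
  assumes d0: "\<forall>x>0. (\<phi> has_real_derivative \<eta> x) (at x)"
    and d1: "\<forall>x>0. (\<eta> has_real_derivative \<eta>1 x) (at x)"
    and d2: "\<forall>x>0. (\<eta>1 has_real_derivative \<eta>2 x) (at x)"
    and d3: "\<forall>x>0. (\<eta>2 has_real_derivative \<eta>3 x) (at x)"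
    and c3: "continuous_on {0<..} \<eta>3"
    and cst: "0 < a0" "a0 < r1" "r1 < r2" "r2 < 2 * a0" "a1 > a0"
    and h1: "\<forall>r. 0 < r \<and> r < r1 \<longrightarrow> \<eta>1 r > 0" "\<forall>r. r > r1 \<longrightarrow> \<eta>1 r < 0"
    and h2: "\<forall>r. 0 < r \<and> r < r2 \<longrightarrow> \<eta>2 r < 0" "\<forall>r. r > r2 \<longrightarrow> \<eta>2 r > 0"
    and h3: "\<forall>r. 0 < r \<and> r < a0 \<longrightarrow> hat_eta \<eta> r < 0" "\<forall>r. r > a0 \<longrightarrow> hat_eta \<eta> r > 0"
    and h4: "\<forall>r. 0 < r \<and> r < a1 \<longrightarrow> deriv (hat_eta \<eta>) r > 0"
            "\<forall>r. r > a1 \<longrightarrow> deriv (hat_eta \<eta>) r < 0"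
    and NK: "0 < K" "K < N - 1"
    and anti: "\<forall>j\<in>{0..N}. f (j + 1) = - f (-j)"
    and rLU: "r2 / 2 < rL" "rL < rU" "\<eta>1 rU + 12 * \<eta>1 (2 * rL) \<ge> 0"
    and Phi: "\<forall>j\<in>{-N..N}.
        \<eta> rL + 4 * \<eta> (2 * rL) - 2 * \<eta> (2 * rU) < - (\<Sum>i=-N..j. f i) \<and>
        - (\<Sum>i=-N..j. f i) < \<eta> rU + 4 * \<eta> (2 * rU) - 2 * \<eta> (2 * rL)"
  shows "\<exists>!r. r \<in> Omega N rL rU \<and> symmetric_vec N r \<and>
              (\<forall>j\<in>{-N..N+1}. Fqcf \<eta> N K r j + f j = 0)"
proof -
  interpret qcf_equilibrium \<eta> \<eta>1 \<eta>2 r1 r2 rL rU N K f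
    using d1 d2 cst h1(2) h2 rLU NK Phi
    by unfold_locales (auto simp: cumulative_load_def less_imp_le)
  show ?thesis
    using symmetric_equilibrium_iff_qcf_map_fixpoint[OF anti] unique_qcf_map_fixpoint by simp
qed

end
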